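(* Let $\mathcal M\in\{\mathcal M_1,\mathcal M_2,\mathcal M_3,\mathcal M_4\}$ and $n\ge 2$. Then $m_{\mathrm{opt}}(n;\mathcal M)>1$, i.e. there is some $m\in\{2,\dots,n\}$ with $F(m;n)<F(1;n)$.
   Context: Let $n\ge 1$, let $\mathbf X=\{X_1,\dots,X_n\}$ with the uniform probability measure. For $1\le m\le n$ let $\mathcal X_m$ be the set of finite sequences $\chi=(\chi_1,\dots,\chi_\ell)$ of elements of $\mathbf X$ such that $\{\chi_1,\dots,\chi_\ell\}$ has exactly $m$ elements and $\chi_\ell\ne\chi_i$ for all $i<\ell$; write $\ell=\ell(\chi)$, give $\chi$ weight $n^{-\ell(\chi)}$ (this is a probability measure on $\mathcal X_m$), and for $f:\mathcal X_m\to\mathbb R$ write $E_m[f]=\sum_{\chi\in\mathcal X_m}f(\chi)n^{-\ell(\chi)}$. For $\chi\in\mathcal X_m$ and $0\le j\le m$ let $t_j(\chi)$ be the least $t\ge0$ with $|\{\chi_1,\dots,\chi_t\}|=j$ (so $t_0=0$), and for $1\le j\le m-1$ let $\tau_j(\chi)=t_{j+1}(\chi)-t_j(\chi)-1$. Put $b(j)=(1+\frac1j)\log_2(j+1)-1$ ($j\ge1$), $b_f(j)=\log_2(j+1)$ ($j\ge0$), $s(j)=\frac{j+1}2$. The four models specify functions $s_{\mathcal L}(k)$ (cost of a search for an object on the sorted list when the list has $k$ objects), $s_{\mathcal P}(j)$ (cost of a search for an object in the pile when the pile has $j$ objects) and the cleanup cost $C_m$: $\mathcal M_1$: $s_{\mathcal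 L}(k)=b(k)$, $s_{\mathcal P}(j)=b_f(n-j)+s(j)$, $C_m=\sum_{j=1}^m b_f(n-j)$; $\mathcal M_2$: $s_{\mathcal L}(k)=b(n)$, $s_{\mathcal P}(j)=b_f(n)+s(j)$, $C_m=m\,b(n)$; $\mathcal M_3$: $s_{\mathcal L}(k)=b(k)$, $s_{\mathcal P}(j)=s(j)$, $C_m=\sum_{j=1}^m b_f(n-j)$; $\mathcal M_4$: $s_{\mathcal L}(k)=b(n)$, $s_{\mathcal P}(j)=s(j)$, $C_m=m\,b(n)$. The average total cost is $F(m;n)=E_m[1/\ell]\Big(\sum_{j=0}^{m-1}s_{\mathcal L}(n-j)+C_m\Big)+\sum_{j=1}^{m-1}E_m[\tau_j/\ell]\,s_{\mathcal P}(j)$, and $m_{\mathrm{opt}}(n;\mathcal M)$ is the smallest $m\in\{1,\dots,n\}$ minimizing $F(m;n)$. *)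

theory Defs
  imports "HOL-Analysis.Analysis"
begin

text \<open>Objects X_1,...,X_n are represented by the naturals 0,...,n-1.
  chiset n m is the set of sequences chi (as lists) with exactly m distinct
  entries whose last entry does not occur earlier.\<close>
definition chiset :: "nat \<Rightarrow> nat \<Rightarrow> nat list set" where
  "chiset n m = {xs. xs \<noteq> [] \<and> set xs \<subseteq> {..<n} \<and> card (set xs) = m
                     \<and> last xs \<notin> set (butlast xs)}"

definition Em :: "nat \<Rightarrow> nat \<Rightarrow> (nat list \<Rightarrow> real) \<Rightarrow> real" where
  "Em n m f = (\<Sum>\<^sub>\<infinity>xs\<in>chiset n m. f xs * (1 / real n) ^ length xs)"

definition tj :: "nat \<Rightarrow> nat list \<Rightarrow> nat" where
  "tj j xs = (LEAST t. card (set (take t xs)) = j)"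

definition tauj :: "nat \<Rightarrow> nat list \<Rightarrow> nat" where
  "tauj j xs = tj (j + 1) xs - tj j xs - 1"

definition bb :: "nat \<Rightarrow> real" where
  "bb j = (1 + 1 / real j) * log 2 (real j + 1) - 1"

definition bf :: "nat \<Rightarrow> real" where
  "bf j = log 2 (real j + 1)"

definition ss :: "nat \<Rightarrow> real" where
  "ss j = (real j + 1) / 2"

datatype model = M1 | M2 | M3 | M4

fun sL :: "model \<Rightarrow> nat \<Rightarrow> nat \<Rightarrow> real" where
  "sL M1 n k = bb k"
| "sL M2 n k = bb n"
| "sL M3 n k = bb k"
| "sL M4 n k = bb n"

fun sP :: "model \<Rightarrow> nat \<Rightarrow> nat \<Rightarrow> real" where
  "sP M1 n j = bf (n - j) + ss j"
| "sP M2 n j = bf n + ss j"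
| "sP M3 n j = ss j"
| "sP M4 n j = ss j"

fun Cm :: "model \<Rightarrow> nat \<Rightarrow> nat \<Rightarrow> real" where
  "Cm M1 n m = (\<Sum>j=1..m. bf (n - j))"
| "Cm M2 n m = real m * bb n"
| "Cm M3 n m = (\<Sum>j=1..m. bf (n - j))"
| "Cm M4 n m = real m * bb n"

definition Fcost :: "model \<Rightarrow> nat \<Rightarrow> nat \<Rightarrow> real" where
  "Fcost M m n =
     Em n m (\<lambda>xs. 1 / real (length xs)) * ((\<Sum>j=0..m-1. sL M n (n - j)) + Cm M n m)
     + (\<Sum>j=1..m-1. Em n m (\<lambda>xs. real (tauj j xs) / real (length xs)) * sP M n j)"

definition m_opt :: "nat \<Rightarrow> model \<Rightarrow> nat" where
  "m_opt n M = (LEAST m. m \<in> {1..n} \<and> (\<forall>k\<in>{1..n}. Fcost M m n \<le> Fcost M k n))"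

end

theory Submission
  imports Defs
begin

text \<open>It suffices to compare \<open>m = 2\<close> with \<open>m = 1\<close>. The sequences counted by \<open>E\<^sub>2\<close> are
  \<open>a\<^sup>k\<^sup>+\<^sup>1 b\<close> with \<open>a \<noteq> b\<close>, so with \<open>q = 1/n\<close> the quantity \<open>A = E\<^sub>2[1/l]\<close> equals
  \<open>n(n-1) \<Sum>\<^sub>k q\<^sup>k\<^sup>+\<^sup>2/(k+2)\<close>, which is strictly less than half of \<open>n(n-1) \<Sum>\<^sub>k q\<^sup>k\<^sup>+\<^sup>2 = 1\<close>;
  and since \<open>\<tau>\<^sub>1 = l - 2\<close> there, \<open>E\<^sub>2[\<tau>\<^sub>1/l] = 1 - 2A\<close>. Hence
  \<open>F(1) - F(2) = (1 - 2A)(s\<^sub>L(n) + C\<^sub>1 - s\<^sub>P(1)) + A(s\<^sub>L(n) + 2C\<^sub>1 - s\<^sub>L(n-1) - C\<^sub>2)\<close>, and in every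
  model the first bracket is positive and the second nonnegative, by the elementary estimates
  \<open>b(n) > 1\<close>, \<open>2b(n) > b\<^sub>f(n) + 1\<close> for \<open>n \<ge> 2\<close> and monotonicity of \<open>b\<close>.\<close>

definition run_snoc :: "nat \<Rightarrow> nat \<Rightarrow> nat \<Rightarrow> nat list" where
  "run_snoc k a b = replicate (Suc k) a @ [b]"

lemma set_run_snoc [simp]: "set (run_snoc k a b) = {a, b}"
  by (auto simp: run_snoc_def)

lemma length_run_snoc [simp]: "length (run_snoc k a b) = k + 2"
  by (simp add: run_snoc_def)

lemma run_snoc_not_Nil [simp]: "run_snoc k a b \<noteq> []"
  by (simp add: run_snoc_def)

lemma last_run_snoc [simp]: "last (run_snoc k a b) = b"
  by (simp add: run_snoc_def)

lemma butlast_run_snoc [simp]: "butlast (run_snoc k a b) = replicate (Suc k) a"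
  by (simp add: run_snoc_def butlast_append)

lemma run_snoc_inject:
  "run_snoc k a b = run_snoc k' a' b' \<longleftrightarrow> k = k' \<and> a = a' \<and> b = b'"
proof
  assume eq: "run_snoc k a b = run_snoc k' a' b'"
  have "k = k'" using arg_cong[OF eq, of length] by simp
  moreover have "a = a'" using arg_cong[OF eq, of hd] by (simp add: run_snoc_def)
  moreover have "b = b'" using arg_cong[OF eq, of last] by (simp add: run_snoc_def)
  ultimately show "k = k' \<and> a = a' \<and> b = b'" by blast
qed simp

lemma chiset_one: "chiset n 1 = (\<lambda>x. [x]) ` {..<n}"
proof (rule set_eqI, rule iffI)
  fix xs assume "xs \<in> chiset n 1"
  then have ne: "xs \<noteq> []" and sub: "set xs \<subseteq> {..<n}" and card: "card (set xs) = 1"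
    and last: "last xs \<notin> set (butlast xs)" by (auto simp: chiset_def)
  obtain x where x: "set xs = {x}" using card by (auto simp: card_Suc_eq)
  then have "last xs = x" using ne by (metis last_in_set singletonD)
  moreover have "set (butlast xs) \<subseteq> {x}" using x by (auto dest: in_set_butlastD)
  ultimately have "butlast xs = []" using last by (metis insertI1 set_empty subset_singleton_iff)
  then have "xs = [x]" using ne \<open>last xs = x\<close> by (metis append_butlast_last_id append_Nil)
  then show "xs \<in> (\<lambda>x. [x]) ` {..<n}" using sub by auto
qed (auto simp: chiset_def)

lemma chiset_two:
  "chiset n 2 = (\<Union>(a, b)\<in>{(a, b). a < n \<and> b < n \<and> a \<noteq> b}. range (\<lambda>k. run_snoc k a b))"
proof (rule set_eqI, rule iffI)
  fix xs assume "xs \<in> chiset n 2"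
  then have ne: "xs \<noteq> []" and sub: "set xs \<subseteq> {..<n}" and card: "card (set xs) = 2"
    and last: "last xs \<notin> set (butlast xs)" by (auto simp: chiset_def)
  define b where "b = last xs"
  have xs: "xs = butlast xs @ [b]" using ne by (simp add: b_def)
  have "card (set (butlast xs)) = 1"
    using card last by (subst (asm) xs) (simp add: b_def)
  then obtain a where a: "set (butlast xs) = {a}" by (auto simp: card_Suc_eq)
  then obtain k where "length (butlast xs) = Suc k" by (cases "butlast xs") auto
  then have "butlast xs = replicate (Suc k) a"
    using a by (metis replicate_length_same singletonD)
  then have "xs = run_snoc k a b" using xs by (simp add: run_snoc_def)
  moreover have "a \<in> set xs" "b \<in> set xs" using a xs by (metis in_set_butlastD insertI1, simp add: b_def ne)
  then have "a < n" "b < n" "a \<noteq> b" using sub a last by (auto simp: b_def)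
  ultimately show "xs \<in> (\<Union>(a, b)\<in>{(a, b). a < n \<and> b < n \<and> a \<noteq> b}. range (\<lambda>k. run_snoc k a b))"
    by blast
qed (auto simp: chiset_def)

lemma card_offdiagonal: "card {(a, b). a < n \<and> b < n \<and> a \<noteq> (b::nat)} = n * n - n"
proof -
  have "{(a, b). a < n \<and> b < n \<and> a \<noteq> b} = {..<n} \<times> {..<n} - (\<lambda>a. (a, a)) ` {..<n}"
    by auto
  moreover have "card ((\<lambda>a. (a, a)) ` {..<n}) = n"
    by (subst card_image) (auto intro: inj_onI)
  moreover have "(\<lambda>a. (a, a)) ` {..<n} \<subseteq> {..<n} \<times> {..<n}" by auto
  ultimately show ?thesis
    by (simp add: card_Diff_subset card_cartesian_product)
qed

lemma Em_one: "Em n 1 f = (\<Sum>x<n. f [x]) / real n"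
  unfolding Em_def chiset_one by (simp add: sum.reindex inj_on_def sum_divide_distrib)

lemma Em_two:
  fixes f :: "nat list \<Rightarrow> real" and g :: "nat \<Rightarrow> real"
  assumes f: "\<And>k a b. a \<noteq> b \<Longrightarrow> f (run_snoc k a b) = g k"
    and g: "((\<lambda>k. g k * (1 / real n) ^ (k + 2)) has_sum S) UNIV"
  shows "Em n 2 f = real (n * n - n) * S"
proof -
  let ?P = "{(a, b). a < n \<and> b < n \<and> a \<noteq> (b::nat)}"
  let ?w = "\<lambda>xs. f xs * (1 / real n) ^ length xs"
  have "(?w has_sum S) (range (\<lambda>k. run_snoc k a b))" if "(a, b) \<in> ?P" for a b
  proof -
    have "inj (\<lambda>k. run_snoc k a b)" by (rule injI) (simp add: run_snoc_inject)
    moreover have "((?w \<circ> (\<lambda>k. run_snoc k a b)) has_sum S) UNIV"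
      using g that by (simp add: o_def f)
    ultimately show ?thesis by (simp add: has_sum_reindex)
  qed
  moreover have "finite ?P" by (rule finite_subset[of _ "{..<n} \<times> {..<n}"]) auto
  ultimately have "(?w has_sum (\<Sum>_\<in>?P. S)) (\<Union>(a, b)\<in>?P. range (\<lambda>k. run_snoc k a b))"
    by (intro sum_has_sum) (auto simp: run_snoc_inject)
  then show ?thesis
    unfolding Em_def chiset_two by (simp add: infsumI card_offdiagonal)
qed

lemma take_run_snoc:
  "take t (run_snoc k a b) = (if t \<le> Suc k then replicate t a else run_snoc k a b)"
  by (auto simp: run_snoc_def take_append min_def simp del: replicate.simps(2))

lemma tj_one_run_snoc: "tj 1 (run_snoc k a b) = 1"
  unfolding tj_def
proof (rule Least_equality)
  fix t assume "card (set (take t (run_snoc k a b))) = 1"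
  then show "1 \<le> t" by (cases t) auto
qed (simp add: take_run_snoc)

lemma tj_two_run_snoc:
  assumes "a \<noteq> b" shows "tj 2 (run_snoc k a b) = k + 2"
  unfolding tj_def
proof (rule Least_equality)
  fix t assume card: "card (set (take t (run_snoc k a b))) = 2"
  show "k + 2 \<le> t"
  proof (rule ccontr)
    assume "\<not> k + 2 \<le> t"
    then have "set (take t (run_snoc k a b)) \<subseteq> {a}" by (simp add: take_run_snoc set_replicate_conv_if)
    then have "card (set (take t (run_snoc k a b))) \<le> 1"
      using card_mono[of "{a}"] by fastforce
    then show False using card by simp
  qed
qed (use assms in \<open>simp add: take_run_snoc\<close>)

lemma tauj_one_run_snoc:
  assumes "a \<noteq> b" shows "tauj 1 (run_snoc k a b) = k"
  unfolding tauj_def one_add_one tj_one_run_snoc tj_two_run_snoc[OF assms] by simp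

lemma has_sum_geometric_shift2:
  fixes q :: real assumes "0 \<le> q" "q < 1"
  shows "((\<lambda>k. q ^ (k + 2)) has_sum (q\<^sup>2 / (1 - q))) UNIV"
proof -
  have "(\<lambda>k. q\<^sup>2 * q ^ k) sums (q\<^sup>2 * (1 / (1 - q)))"
    using assms by (intro sums_mult geometric_sums) simp
  moreover have "(\<lambda>k. q ^ (k + 2)) = (\<lambda>k. q\<^sup>2 * q ^ k)"
    by (simp add: power_add power2_eq_square mult_ac)
  ultimately show ?thesis
    using assms by (intro sums_nonneg_imp_has_sum) simp_all
qed

lemma has_sum_power_over_exponent:
  fixes q :: real assumes q: "0 < q" "q < 1"
  obtains S where "((\<lambda>k. 1 / real (k + 2) * q ^ (k + 2)) has_sum S) UNIV"
    and "0 \<le> S" and "S < q\<^sup>2 / (1 - q) / 2"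
proof -
  let ?a = "\<lambda>k. 1 / real (k + 2) * q ^ (k + 2)"
  have geo: "((\<lambda>k. q ^ (k + 2)) has_sum (q\<^sup>2 / (1 - q))) UNIV"
    using q by (intro has_sum_geometric_shift2) simp_all
  have "summable ?a"
  proof (rule summable_comparison_test')
    show "summable (\<lambda>k. q ^ (k + 2))"
      using geo by (intro sums_summable has_sum_imp_sums)
    show "norm (?a k) \<le> q ^ (k + 2)" for k
      using q by (simp add: divide_le_eq)
  qed
  then have sum: "(?a has_sum suminf ?a) UNIV"
    using q by (intro sums_nonneg_imp_has_sum summable_sums) simp_all
  moreover have "0 \<le> suminf ?a"
    using q by (intro has_sum_nonneg[OF sum]) simp
  moreover have "suminf ?a < q\<^sup>2 / (1 - q) * (1 / 2)"
  proof (rule has_sum_strict_mono[OF sum has_sum_cmult_left[OF geo]])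
    show "?a k \<le> q ^ (k + 2) * (1 / 2)" for k
      using q by (simp add: divide_le_eq)
    show "?a 1 < q ^ (1 + 2) * (1 / 2)"
      using q by simp
  qed simp
  ultimately show ?thesis using that by simp
qed

lemma Em_two_inverse_length:
  assumes n: "n \<ge> 2"
  defines "A \<equiv> Em n 2 (\<lambda>xs. 1 / real (length xs))"
  shows "0 \<le> A" and "A < 1 / 2"
    and "Em n 2 (\<lambda>xs. real (tauj 1 xs) / real (length xs)) = 1 - 2 * A"
proof -
  define q where "q = 1 / real n"
  define c where "c = real (n * n - n)"
  have q: "0 < q" "q < 1" using n by (auto simp: q_def)
  have "c = real n * (real n - 1)"
    using n by (simp add: c_def of_nat_diff algebra_simps)
  then have c: "0 < c" "c * (q\<^sup>2 / (1 - q)) = 1"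
    using n by (simp, simp add: q_def field_simps power2_eq_square)
  obtain S where S: "((\<lambda>k. 1 / real (k + 2) * q ^ (k + 2)) has_sum S) UNIV"
    and "0 \<le> S" "S < q\<^sup>2 / (1 - q) / 2"
    using has_sum_power_over_exponent[OF q] by blast
  have A: "A = c * S"
    unfolding A_def c_def using S unfolding q_def
    by (intro Em_two[where g = "\<lambda>k. 1 / real (k + 2)"]) simp_all
  then show "0 \<le> A"
    using c \<open>0 \<le> S\<close> by simp
  have "A < c * (q\<^sup>2 / (1 - q) / 2)"
    unfolding A using c \<open>S < q\<^sup>2 / (1 - q) / 2\<close> by (intro mult_strict_left_mono)
  also have "\<dots> = c * (q\<^sup>2 / (1 - q)) / 2"
    by simp
  also have "\<dots> = 1 / 2"
    unfolding c(2) by simp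
  finally show "A < 1 / 2" .
  \<comment> \<open>on \<open>chiset n 2\<close> we have \<open>tauj 1 = length - 2\<close>, so \<open>tauj 1 / length = 1 - 2 / length\<close>\<close>
  have "((\<lambda>k. q ^ (k + 2) + -2 * (1 / real (k + 2) * q ^ (k + 2)))
          has_sum (q\<^sup>2 / (1 - q) + -2 * S)) UNIV"
    using q by (intro has_sum_add has_sum_geometric_shift2 has_sum_cmult_right S) simp_all
  moreover have "q ^ (k + 2) + -2 * (1 / real (k + 2) * q ^ (k + 2)) = real k / real (k + 2) * q ^ (k + 2)"
    for k by (simp add: field_simps)
  ultimately have "((\<lambda>k. real k / real (k + 2) * q ^ (k + 2)) has_sum (q\<^sup>2 / (1 - q) - 2 * S)) UNIV"
    by simp
  then have "Em n 2 (\<lambda>xs. real (tauj 1 xs) / real (length xs)) = c * (q\<^sup>2 / (1 - q) - 2 * S)"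
    unfolding c_def q_def
    by (intro Em_two[where g = "\<lambda>k. real k / real (k + 2)"]) (simp_all add: tauj_one_run_snoc[simplified])
  then show "Em n 2 (\<lambda>xs. real (tauj 1 xs) / real (length xs)) = 1 - 2 * A"
    unfolding right_diff_distrib c(2) A by simp
qed

lemma bf_nonneg: "0 \<le> bf j"
  by (simp add: bf_def)

lemma log2_lower_bound:
  fixes n c d :: nat
  assumes n: "0 < n" and pow: "2 ^ (d * n) < (n + 1) ^ (n + c)"
  shows "real d < (1 + real c / real n) * log 2 (real n + 1)"
proof -
  have "real d * real n = log 2 (2 ^ (d * n))"
    by (simp add: log_nat_power)
  also have "\<dots> < log 2 ((real n + 1) ^ (n + c))"
  proof (subst log_less_cancel_iff)
    have "real (2 ^ (d * n)) < real ((n + 1) ^ (n + c))"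
      using pow by (simp only: of_nat_less_iff)
    then show "(2::real) ^ (d * n) < (real n + 1) ^ (n + c)"
      by (simp add: add.commute)
  qed simp_all
  also have "\<dots> = (real n + real c) * log 2 (real n + 1)"
    by (simp add: log_nat_power)
  finally show ?thesis
    using n by (simp add: field_simps)
qed

lemma bb_gt_one:
  assumes n: "n \<ge> 2" shows "1 < bb n"
proof -
  have "(4::nat) ^ n < (n + 1) ^ (n + 1)"
  proof (cases "n = 2")
    case False
    then have "3 \<le> n" using n by simp
    then have "(4::nat) ^ (n + 1) \<le> (n + 1) ^ (n + 1)" by (intro power_mono) simp_all
    then show ?thesis by (rule less_le_trans[rotated]) simp
  qed simp
  then have "real 2 < (1 + real 1 / real n) * log 2 (real n + 1)"
    using n by (intro log2_lower_bound) (simp_all add: power_mult)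
  then show ?thesis by (simp add: bb_def)
qed

lemma bf_plus_one_less_two_bb:
  assumes n: "n \<ge> 2" shows "bf n + 1 < 2 * bb n"
proof -
  have "(8::nat) ^ n < (n + 1) ^ (n + 2)"
  proof (cases "n \<ge> 7")
    case True
    then have "(8::nat) ^ (n + 2) \<le> (n + 1) ^ (n + 2)" by (intro power_mono) simp_all
    then show ?thesis by (rule less_le_trans[rotated]) simp
  next
    case False
    then have "n \<in> {2, 3, 4, 5, 6}" using n by auto
    then show ?thesis by auto
  qed
  then have "real 3 < (1 + real 2 / real n) * log 2 (real n + 1)"
    using n by (intro log2_lower_bound) (simp_all add: power_mult)
  then show ?thesis by (simp add: bb_def bf_def algebra_simps)
qed

lemma bb_le_Suc:
  assumes "1 \<le> j" shows "bb j \<le> bb (Suc j)"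
proof -
  define x where "x = real j"
  define u where "u = ln (x + 1)"
  define w where "w = ln (x + 2)"
  have x: "1 \<le> x" using assms by (simp add: x_def)
  have "ln ((x + 1) / (x + 2)) \<le> (x + 1) / (x + 2) - 1"
    using x by (intro ln_le_minus_one) auto
  then have "u + 1 / (x + 2) \<le> w"
    using x by (simp add: u_def w_def ln_div field_simps)
  then have "x * (x + 2) * (u + 1 / (x + 2)) \<le> x * (x + 2) * w"
    using x by (intro mult_left_mono) auto
  moreover have "x * (x + 2) * (u + 1 / (x + 2)) = x * (x + 2) * u + x"
    using x by (simp add: field_simps)
  moreover have "u \<le> x"
    using ln_add_one_self_le_self[of x] x by (simp add: u_def add.commute)
  ultimately have key: "(x + 1) * (x + 1) * u \<le> x * (x + 2) * w"
    by (simp add: algebra_simps)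
  have "(1 + 1 / x) * u * (x * (x + 1)) = (x + 1) * (x + 1) * u"
    and "(1 + 1 / (x + 1)) * w * (x * (x + 1)) = x * (x + 2) * w"
    using x by (simp_all add: field_simps)
  then have "(1 + 1 / x) * u * (x * (x + 1)) \<le> (1 + 1 / (x + 1)) * w * (x * (x + 1))"
    using key by (simp only:)
  then have "(1 + 1 / x) * u \<le> (1 + 1 / (x + 1)) * w"
    using x by (simp add: mult_le_cancel_right_pos)
  then have "(1 + 1 / x) * u / ln 2 \<le> (1 + 1 / (x + 1)) * w / ln 2"
    by (simp add: divide_right_mono)
  moreover have "real (Suc j) + 1 = x + 2"
    by (simp add: x_def)
  ultimately show ?thesis
    by (simp add: bb_def log_def x_def u_def w_def add.commute)
qed

lemma Fcost_one:
  assumes "1 \<le> n" shows "Fcost M 1 n = sL M n n + Cm M n 1"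
proof -
  have "Em n 1 (\<lambda>xs. 1 / real (length xs)) = 1"
    unfolding Em_one using assms by simp
  then show ?thesis
    unfolding Fcost_def by simp
qed

lemma Fcost_two:
  "Fcost M 2 n = Em n 2 (\<lambda>xs. 1 / real (length xs)) * (sL M n n + sL M n (n - 1) + Cm M n 2)
     + Em n 2 (\<lambda>xs. real (tauj 1 xs) / real (length xs)) * sP M n 1"
  by (simp add: Fcost_def numeral_2_eq_2)

lemma sP_one_less:
  assumes n: "n \<ge> 2" shows "sP M n 1 < sL M n n + Cm M n 1"
  using bb_gt_one[OF n] bf_plus_one_less_two_bb[OF n] bf_nonneg[of "n - 1"]
  by (cases M) (simp_all add: ss_def)

lemma sL_Cm_two_le:
  assumes n: "n \<ge> 2" shows "sL M n (n - 1) + Cm M n 2 \<le> sL M n n + 2 * Cm M n 1"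
proof -
  have "bb (n - 1) \<le> bb n"
    using bb_le_Suc[of "n - 1"] n by (simp add: Suc_diff_1)
  moreover have "bf (n - 2) \<le> bf (n - 1)"
    using n by (simp add: bf_def)
  ultimately show ?thesis
    by (cases M) (simp_all add: numeral_2_eq_2)
qed

lemma Fcost_two_less_one:
  assumes n: "n \<ge> 2" shows "Fcost M 2 n < Fcost M 1 n"
proof -
  define A where "A = Em n 2 (\<lambda>xs. 1 / real (length xs))"
  have A: "0 \<le> A" "A < 1 / 2"
    and tau: "Em n 2 (\<lambda>xs. real (tauj 1 xs) / real (length xs)) = 1 - 2 * A"
    using Em_two_inverse_length[OF n] unfolding A_def by auto
  have F1: "Fcost M 1 n = sL M n n + Cm M n 1"
    using n by (intro Fcost_one) simp
  have "Fcost M 1 n - Fcost M 2 n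
      = (1 - 2 * A) * (sL M n n + Cm M n 1 - sP M n 1)
        + A * (sL M n n + 2 * Cm M n 1 - (sL M n (n - 1) + Cm M n 2))"
    unfolding F1 Fcost_two tau A_def[symmetric] by (simp add: algebra_simps)
  moreover have "0 < (1 - 2 * A) * (sL M n n + Cm M n 1 - sP M n 1)"
    using A sP_one_less[OF n] by simp
  moreover have "0 \<le> A * (sL M n n + 2 * Cm M n 1 - (sL M n (n - 1) + Cm M n 2))"
    using A sL_Cm_two_le[OF n] by simp
  ultimately show ?thesis by linarith
qed

lemma m_opt_minimizes:
  assumes "1 \<le> n"
  shows "m_opt n M \<in> {1..n}" and "\<And>k. k \<in> {1..n} \<Longrightarrow> Fcost M (m_opt n M) n \<le> Fcost M k n"
proof -
  obtain m where "is_arg_min (\<lambda>k. Fcost M k n) (\<lambda>k. k \<in> {1..n}) m"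
    using ex_is_arg_min_if_finite[of "{1..n}" "\<lambda>k. Fcost M k n"] assms by auto
  then have "m \<in> {1..n} \<and> (\<forall>k\<in>{1..n}. Fcost M m n \<le> Fcost M k n)"
    by (simp add: is_arg_min_linorder)
  then have "m_opt n M \<in> {1..n} \<and> (\<forall>k\<in>{1..n}. Fcost M (m_opt n M) n \<le> Fcost M k n)"
    unfolding m_opt_def by (rule LeastI)
  then show "m_opt n M \<in> {1..n}" and "\<And>k. k \<in> {1..n} \<Longrightarrow> Fcost M (m_opt n M) n \<le> Fcost M k n"
    by blast+
qed

theorem proposition1:
  fixes M :: model and n :: nat
  assumes "n \<ge> 2"
  shows "m_opt n M > 1 \<and> (\<exists>m\<in>{2..n}. Fcost M m n < Fcost M 1 n)"
proof -
  have less: "Fcost M 2 n < Fcost M 1 n"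
    using Fcost_two_less_one[OF assms] .
  have "Fcost M (m_opt n M) n \<le> Fcost M 2 n"
    using assms by (intro m_opt_minimizes) auto
  then have "m_opt n M \<noteq> 1"
    using less by auto
  then have "m_opt n M > 1"
    using m_opt_minimizes(1)[of n M] assms by simp
  moreover have "2 \<in> {2..n}" using assms by simp
  ultimately show ?thesis using less by blast
qed

end
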